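(* Let $\psi$ be a bounded complexity measure, let $k\in\omega\setminus\{0,1\}$, and let $A$ be a nontrivial closed class of decision tables from $\mathcal{M}_k^\infty$. Then the function $\mathcal{H}^\infty_{\psi,A}$ is everywhere defined (i.e. defined for every $n\in\omega$) if and only if the function $L_{\psi,A}$ is everywhere defined.
   Context: Notation: $\omega=\{0,1,2,\dots\}$; $\mathcal P(\omega)$ is the set of nonempty finite subsets of $\omega$; for $k\in\omega\setminus\{0,1\}$, $E_k=\{0,1,\dots,k-1\}$. $P=\{f_i:i\in\omega\}$ is a set of attributes, $f_i\neq f_j$ for $i\ne j$. Decision tables: $\mathcal M_k^\infty$ is the set of rectangular tables filled with numbers from $E_k$, whose columns are labeled with pairwise different attributes from $P$, whose rows are pairwise different, and each row of which is labeled with a set from $\mathcal P(\omega)$ (its set of decisions). The empty table (no rows) is denoted $\Lambda$ and belongs to $\mathcal M_k^\infty$. For $T\in\mathcal M_k^\infty$: $\Delta(T)$ is the set of rows; $\Pi(T)$ is the intersection of the decision sets of all rows (common decisions); $\mathcal M_k^{\infty c}$ is the set of tables having at least one common decision, and $\Lambda\in\mathcal M_k^{\infty c}$; $\mathrm{At}(T)$ is the set of attributes labeling columns; $W(T)=|\mathrm{At}(T)|$; $N(T)$ is the number of rows. For nonempty $T$, $\Omega_k(T)$ is the set of finite words (including the empty word $\lambda$) over the alphabet $\{(f_i,\delta):f_i\in\mathrm{At}(T),\delta\in E_k\}$; for $\alpha=(f_{i_1},\delta_1)\cdots(f_{i_m},\delta_m)$, $T\alpha$ is the subtable of $T$ consisting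 of the rows having value $\delta_j$ in the column $f_{i_j}$ for all $j$, and $T\lambda=T$. Operations: for $D\subseteq\mathrm{At}(T)$, $I(D,T)$ is obtained from $T$ by deleting the columns labeled with attributes from $D$ and, in each group of rows coinciding on the remaining columns, keeping only the first row (with its decision set); $I(\mathrm{At}(T),T)=\Lambda$. For $\nu:E_k^{|\mathrm{At}(T)|}\to\mathcal P(\omega)$, $J(\nu,T)$ is obtained by replacing the decision set of each row $\bar\delta$ by $\nu(\bar\delta)$. $[T]=\{J(\nu,I(D,T)):D\subseteq\mathrm{At}(T),\ \nu:E_k^{|\mathrm{At}(T)\setminus D|}\to\mathcal P(\omega)\}$; for nonempty $A\subseteq\mathcal M_k^\infty$, $[A]=\bigcup_{T\in A}[T]$. $A$ is a closed class if $[A]=A$; it is nontrivial if it contains a nonempty table. Decision trees: a $k$-decision tree is a finite directed rooted tree with at least two nodes in which the root and the edges leaving the root are unlabeled, each terminal node is labeled with a decision from $\omega$, and each other node is labeled with an attribute from $P$, each edge leaving such a node being labeled with a number from $E_k$. $\mathrm{At}(\Gamma)$ is the set of attributes labeling nodes of $\Gamma$. For a complete path $\tau=v_1,d_1,\dots,v_m,d_m,v_{m+1}$ (from the root $v_1$ to a terminal node $v_{m+1}$), $\pi(\tau)=\lambda$ if $m=1$, and otherwise $\pi(\tau)=(f_{i_2},\delta_2)\cdots(f_{i_m},\delta_m)$ where $v_j$ is labeled $f_{i_j}$ and $d_j$ is labeled $\delta_j$; $T(\tau)=T\pi(\tau)$. For $T\ne\Lambda$, a nondeterministic decision tree for $T$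 is a $k$-decision tree $\Gamma$ with $\mathrm{At}(\Gamma)\subseteq\mathrm{At}(T)$ such that every row of $T$ belongs to $T(\tau)$ for some complete path $\tau$, and for every complete path $\tau$ either $T(\tau)=\Lambda$ or the decision at the terminal node of $\tau$ belongs to $\Pi(T(\tau))$. A deterministic decision tree for $T$ is a nondeterministic decision tree for $T$ in which, additionally, exactly one edge leaves the root and the edges leaving any node that is neither the root nor terminal are labeled with pairwise different numbers. Complexity measures: a partially bounded complexity measure is a function $\psi:P^*\to\omega$ on finite words over the alphabet $P$ such that for all words $\alpha_1,\alpha_2$: $\psi(\alpha_1)=0$ iff $\alpha_1=\lambda$; $\psi(\alpha_1)$ is invariant under permutation of the letters of $\alpha_1$; $\psi(\alpha_1)\le\psi(\alpha_1\alpha_2)$; $\psi(\alpha_1\alpha_2)\le\psi(\alpha_1)+\psi(\alpha_2)$. It is a bounded complexity measure if in addition $\psi(\alpha)\ge|\alpha|$ for every word $\alpha$. The depth is $h(\alpha)=|\alpha|$. $\psi$ is extended to finite sets by $\psi(\emptyset)=0$, $\psi(\{f_{i_1},\dots,f_{i_m}\})=\psi(f_{i_1}\cdots f_{i_m})$, and to words $(f_{i_1},\delta_1)\cdots(f_{i_m},\delta_m)$ by $\psi(f_{i_1}\cdots f_{i_m})$ ($\psi(\lambda)=0$). For a $k$-decision tree $\Gamma$, $\psi(\Gamma)=\max_\tau\psi(\pi(\tau))$ over complete paths $\tau$. For $T\ne\Lambda$, $\psi^d(T)$ (resp. $\psi^a(T)$) is the minimum of $\psi(\Gamma)$ over deterministic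 (resp. nondeterministic) decision trees $\Gamma$ for $T$; $\psi^d(\Lambda)=\psi^a(\Lambda)=0$. Further definitions: for $T\ne\Lambda$ and $n\in\omega$, $\Omega_k^n(T)=\{\alpha\in\Omega_k(T):\psi(\alpha)\le n\}$. A finite set $U\subseteq\Omega_k^n(T)$ is a $(\psi,n)$-cover of $T$ if $\bigcup_{\alpha\in U}\Delta(T\alpha)=\Delta(T)$; it is irreducible if no proper subset of $U$ is a $(\psi,n)$-cover of $T$. $l_\psi(T,n)$ is the maximum cardinality of an irreducible $(\psi,n)$-cover of $T$, and $l_\psi(\Lambda,n)=0$. For a class $A$: $L_{\psi,A}(n)$ is undefined if the set $\{l_\psi(T,n):T\in A\}$ is infinite, and otherwise equals its maximum. $\mathcal H^\infty_{\psi,A}(n)$ is undefined if the set $\{\psi^d(T):T\in A,\ \psi^a(T)\le n\}$ is infinite, and otherwise equals its maximum. *)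

theory Defs
  imports Main "HOL-Library.Multiset"
begin

text \<open>Attribute f_i is identified with the natural number i.
  A table is a pair (column labels, rows); each row is a pair (tuple of values, decision set).\<close>

type_synonym table = "nat list \<times> (nat list \<times> nat set) list"

definition empty_table :: table where
  "empty_table = ([], [])"

definition At :: "table \<Rightarrow> nat set" where
  "At T = set (fst T)"

definition Rows :: "table \<Rightarrow> (nat list \<times> nat set) set" where
  "Rows T = set (snd T)"

definition valid_table :: "nat \<Rightarrow> table \<Rightarrow> bool" where
  "valid_table k T \<longleftrightarrow>
     distinct (fst T) \<and> distinct (map fst (snd T)) \<and>
     (\<forall>(r, D) \<in> set (snd T). length r = length (fst T) \<and> (\<forall>v\<in>set r. v < k)
                              \<and> finite D \<and> D \<noteq> {}) \<and>
     (snd T = [] \<longleftrightarrow> fst T = [])"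

definition M_inf :: "nat \<Rightarrow> table set" where
  "M_inf k = {T. valid_table k T}"

definition Pi_dec :: "table \<Rightarrow> nat set" where
  "Pi_dec T = (\<Inter>(r, D) \<in> set (snd T). D)"

definition row_matches :: "nat list \<Rightarrow> nat list \<Rightarrow> (nat \<times> nat) list \<Rightarrow> bool" where
  "row_matches as r \<alpha> \<longleftrightarrow> (\<forall>(f, \<delta>) \<in> set \<alpha>. map_of (zip as r) f = Some \<delta>)"

definition sub :: "table \<Rightarrow> (nat \<times> nat) list \<Rightarrow> table" where
  "sub T \<alpha> = (let rs = filter (\<lambda>(r, D). row_matches (fst T) r \<alpha>) (snd T)
               in if rs = [] then empty_table else (fst T, rs))"

definition Omega :: "nat \<Rightarrow> table \<Rightarrow> (nat \<times> nat) list set" where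
  "Omega k T = {\<alpha>. \<forall>(f, \<delta>) \<in> set \<alpha>. f \<in> At T \<and> \<delta> < k}"

fun dedup :: "('a \<times> 'b) list \<Rightarrow> ('a \<times> 'b) list" where
  "dedup [] = []"
| "dedup ((r, d) # xs) = (r, d) # dedup (filter (\<lambda>(r', _). r' \<noteq> r) xs)"

definition proj :: "nat set \<Rightarrow> nat list \<Rightarrow> nat list \<Rightarrow> nat list" where
  "proj D as r = map snd (filter (\<lambda>(a, v). a \<notin> D) (zip as r))"

definition I_op :: "nat set \<Rightarrow> table \<Rightarrow> table" where
  "I_op D T = (if set (fst T) \<subseteq> D then empty_table
               else (filter (\<lambda>a. a \<notin> D) (fst T),
                     dedup (map (\<lambda>(r, d). (proj D (fst T) r, d)) (snd T))))"

definition J_op :: "(nat list \<Rightarrow> nat set) \<Rightarrow> table \<Rightarrow> table" where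
  "J_op \<nu> T = (fst T, map (\<lambda>(r, d). (r, \<nu> r)) (snd T))"

definition closure1 :: "nat \<Rightarrow> table \<Rightarrow> table set" where
  "closure1 k T = {J_op \<nu> (I_op D T) | D \<nu>. D \<subseteq> At T \<and>
      (\<forall>t. length t = card (At T - D) \<and> (\<forall>v\<in>set t. v < k) \<longrightarrow> finite (\<nu> t) \<and> \<nu> t \<noteq> {})}"

definition closure :: "nat \<Rightarrow> table set \<Rightarrow> table set" where
  "closure k A = (\<Union>T\<in>A. closure1 k T)"

definition closed_class :: "nat \<Rightarrow> table set \<Rightarrow> bool" where
  "closed_class k A \<longleftrightarrow> A \<noteq> {} \<and> A \<subseteq> M_inf k \<and> closure k A = A"

definition nontrivial_class :: "table set \<Rightarrow> bool" where
  "nontrivial_class A \<longleftrightarrow> (\<exists>T\<in>A. T \<noteq> empty_table)"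

text \<open>A subtree below the (unlabeled) root: a terminal node labeled with a decision,
  or a node labeled with an attribute together with its outgoing edges (label, child).
  A k-decision tree is the nonempty list of subtrees hanging from the root.\<close>
datatype dtree = Leaf nat | Node nat "(nat \<times> dtree) list"

type_synonym ktree = "dtree list"

inductive wf_sub :: "nat \<Rightarrow> dtree \<Rightarrow> bool" for k :: nat where
  "wf_sub k (Leaf d)"
| "es \<noteq> [] \<Longrightarrow> (\<And>\<delta> c. (\<delta>, c) \<in> set es \<Longrightarrow> \<delta> < k \<and> wf_sub k c) \<Longrightarrow> wf_sub k (Node f es)"

inductive det_sub :: "dtree \<Rightarrow> bool" where
  "det_sub (Leaf d)"
| "distinct (map fst es) \<Longrightarrow> (\<And>\<delta> c. (\<delta>, c) \<in> set es \<Longrightarrow> det_sub c) \<Longrightarrow> det_sub (Node f es)"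

inductive attr_in :: "nat \<Rightarrow> dtree \<Rightarrow> bool" where
  "attr_in f (Node f es)"
| "(\<delta>, c) \<in> set es \<Longrightarrow> attr_in g c \<Longrightarrow> attr_in g (Node f es)"

inductive path_of :: "dtree \<Rightarrow> (nat \<times> nat) list \<Rightarrow> nat \<Rightarrow> bool" where
  "path_of (Leaf d) [] d"
| "(\<delta>, c) \<in> set es \<Longrightarrow> path_of c w d \<Longrightarrow> path_of (Node f es) ((f, \<delta>) # w) d"

definition k_tree :: "nat \<Rightarrow> ktree \<Rightarrow> bool" where
  "k_tree k \<Gamma> \<longleftrightarrow> \<Gamma> \<noteq> [] \<and> (\<forall>t\<in>set \<Gamma>. wf_sub k t)"

definition At_tree :: "ktree \<Rightarrow> nat set" where
  "At_tree \<Gamma> = {f. \<exists>t\<in>set \<Gamma>. attr_in f t}"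

definition nondet_tree :: "nat \<Rightarrow> table \<Rightarrow> ktree \<Rightarrow> bool" where
  "nondet_tree k T \<Gamma> \<longleftrightarrow> k_tree k \<Gamma> \<and> At_tree \<Gamma> \<subseteq> At T \<and>
     (\<forall>row\<in>Rows T. \<exists>t\<in>set \<Gamma>. \<exists>w d. path_of t w d \<and> row \<in> Rows (sub T w)) \<and>
     (\<forall>t\<in>set \<Gamma>. \<forall>w d. path_of t w d \<longrightarrow> sub T w = empty_table \<or> d \<in> Pi_dec (sub T w))"

definition det_tree :: "nat \<Rightarrow> table \<Rightarrow> ktree \<Rightarrow> bool" where
  "det_tree k T \<Gamma> \<longleftrightarrow> nondet_tree k T \<Gamma> \<and> length \<Gamma> = 1 \<and> (\<forall>t\<in>set \<Gamma>. det_sub t)"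

definition complexity_measure :: "(nat list \<Rightarrow> nat) \<Rightarrow> bool" where
  "complexity_measure \<psi> \<longleftrightarrow>
     (\<forall>a. \<psi> a = 0 \<longleftrightarrow> a = []) \<and>
     (\<forall>a b. mset a = mset b \<longrightarrow> \<psi> a = \<psi> b) \<and>
     (\<forall>a b. \<psi> a \<le> \<psi> (a @ b)) \<and>
     (\<forall>a b. \<psi> (a @ b) \<le> \<psi> a + \<psi> b)"

definition bounded_complexity_measure :: "(nat list \<Rightarrow> nat) \<Rightarrow> bool" where
  "bounded_complexity_measure \<psi> \<longleftrightarrow> complexity_measure \<psi> \<and> (\<forall>a. length a \<le> \<psi> a)"

definition psi_tree :: "(nat list \<Rightarrow> nat) \<Rightarrow> ktree \<Rightarrow> nat" where
  "psi_tree \<psi> \<Gamma> = Max {\<psi> (map fst w) | t w d. t \<in> set \<Gamma> \<and> path_of t w d}"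

definition psi_d :: "(nat list \<Rightarrow> nat) \<Rightarrow> nat \<Rightarrow> table \<Rightarrow> nat" where
  "psi_d \<psi> k T = (if T = empty_table then 0
                   else (LEAST n. \<exists>\<Gamma>. det_tree k T \<Gamma> \<and> psi_tree \<psi> \<Gamma> = n))"

definition psi_a :: "(nat list \<Rightarrow> nat) \<Rightarrow> nat \<Rightarrow> table \<Rightarrow> nat" where
  "psi_a \<psi> k T = (if T = empty_table then 0
                   else (LEAST n. \<exists>\<Gamma>. nondet_tree k T \<Gamma> \<and> psi_tree \<psi> \<Gamma> = n))"

definition Omega_n :: "(nat list \<Rightarrow> nat) \<Rightarrow> nat \<Rightarrow> table \<Rightarrow> nat \<Rightarrow> (nat \<times> nat) list set" where
  "Omega_n \<psi> k T n = {\<alpha> \<in> Omega k T. \<psi> (map fst \<alpha>) \<le> n}"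

definition is_cover :: "(nat list \<Rightarrow> nat) \<Rightarrow> nat \<Rightarrow> table \<Rightarrow> nat \<Rightarrow> (nat \<times> nat) list set \<Rightarrow> bool" where
  "is_cover \<psi> k T n U \<longleftrightarrow> finite U \<and> U \<subseteq> Omega_n \<psi> k T n \<and> (\<Union>\<alpha>\<in>U. Rows (sub T \<alpha>)) = Rows T"

definition irred_cover :: "(nat list \<Rightarrow> nat) \<Rightarrow> nat \<Rightarrow> table \<Rightarrow> nat \<Rightarrow> (nat \<times> nat) list set \<Rightarrow> bool" where
  "irred_cover \<psi> k T n U \<longleftrightarrow> is_cover \<psi> k T n U \<and> (\<forall>V. V \<subset> U \<longrightarrow> \<not> is_cover \<psi> k T n V)"

definition l_psi :: "(nat list \<Rightarrow> nat) \<Rightarrow> nat \<Rightarrow> table \<Rightarrow> nat \<Rightarrow> nat" where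
  "l_psi \<psi> k T n = (if T = empty_table then 0
                     else Max {card U | U. irred_cover \<psi> k T n U})"

definition L_defined :: "(nat list \<Rightarrow> nat) \<Rightarrow> nat \<Rightarrow> table set \<Rightarrow> nat \<Rightarrow> bool" where
  "L_defined \<psi> k A n \<longleftrightarrow> finite {l_psi \<psi> k T n | T. T \<in> A}"

definition H_defined :: "(nat list \<Rightarrow> nat) \<Rightarrow> nat \<Rightarrow> table set \<Rightarrow> nat \<Rightarrow> bool" where
  "H_defined \<psi> k A n \<longleftrightarrow> finite {psi_d \<psi> k T | T. T \<in> A \<and> psi_a \<psi> k T \<le> n}"

end

theory Submission
  imports Defs "HOL-Library.Countable"
begin

text \<open>If \<open>l\<^sub>\<psi>(T, n) \<le> B\<close> throughout \<open>A\<close> and \<open>\<psi>\<^sup>a(T) \<le> n\<close>, the paths of an optimal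
  nondeterministic tree for \<open>T\<close> form a \<open>(\<psi>, n)\<close>-cover; an irreducible subcover \<open>U\<close> has at most
  \<open>B\<close> words, and the complete deterministic tree querying all attributes occurring in \<open>U\<close> solves \<open>T\<close>
  with complexity at most \<open>|U| n \<le> B n\<close> by subadditivity of \<open>\<psi>\<close>.
  Conversely, relabel each row of \<open>T \<in> A\<close> by (codes of) the words of an irreducible cover \<open>U\<close> it
  satisfies. The new table lies in the closed class \<open>A\<close>, it is solved nondeterministically along
  \<open>U\<close> with complexity at most \<open>n\<close>, and every deterministic tree for it needs \<open>|U|\<close> different leaf
  decisions (each word of \<open>U\<close> is the only one matched by some row). Since \<open>\<psi>\<close> dominates the depth,
  \<open>|U| \<le> k\<^bsup>\<psi>\<^sup>d\<^esup>\<close>, which bounds \<open>l\<^sub>\<psi>\<close> once \<open>\<psi>\<^sup>d\<close> is bounded.\<close>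

lemma Rows_sub: "Rows (sub T \<alpha>) = {x \<in> Rows T. row_matches (fst T) (fst x) \<alpha>}"
  unfolding sub_def Rows_def Let_def empty_table_def
  by (auto simp: filter_empty_conv split: if_splits)

lemma sub_eq_empty_iff: "sub T \<alpha> = empty_table \<longleftrightarrow> Rows (sub T \<alpha>) = {}"
  unfolding sub_def Rows_def Let_def empty_table_def by auto

lemma Pi_dec_eq_Inter_Rows: "Pi_dec T = (\<Inter>x\<in>Rows T. snd x)"
  unfolding Pi_dec_def Rows_def by (auto simp: case_prod_beta)

lemma row_matches_value: "row_matches as r w \<Longrightarrow> (f, \<delta>) \<in> set w \<Longrightarrow> map_of (zip as r) f = Some \<delta>"
  unfolding row_matches_def by fastforce

lemma valid_table_row:
  "valid_table k T \<Longrightarrow> (r, D) \<in> Rows T \<Longrightarrow>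
     length r = length (fst T) \<and> (\<forall>v\<in>set r. v < k) \<and> finite D \<and> D \<noteq> {}"
  unfolding valid_table_def Rows_def by fast

lemma valid_table_Rows_nonempty: "valid_table k T \<Longrightarrow> T \<noteq> empty_table \<Longrightarrow> Rows T \<noteq> {}"
  unfolding valid_table_def Rows_def empty_table_def by (cases T) auto

lemma map_of_zip_row:
  assumes "length r = length as" "b \<in> set as"
  shows "\<exists>v\<in>set r. map_of (zip as r) b = Some v"
proof -
  obtain v where v: "map_of (zip as r) b = Some v"
    using assms map_of_zip_is_Some[of as r] by metis
  then have "v \<in> set r" by (blast dest: map_of_SomeD set_zip_rightD)
  with v show ?thesis by blast
qed

lemma Rows_sub_subset:
  assumes x: "x \<in> Rows (sub T w)" "x \<in> Rows (sub T \<alpha>)" and attrs: "fst ` set \<alpha> \<subseteq> fst ` set w"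
  shows "Rows (sub T w) \<subseteq> Rows (sub T \<alpha>)"
proof
  fix y assume y: "y \<in> Rows (sub T w)"
  have xw: "row_matches (fst T) (fst x) w" and xa: "row_matches (fst T) (fst x) \<alpha>"
    and yw: "row_matches (fst T) (fst y) w" using x y by (simp_all add: Rows_sub)
  have "map_of (zip (fst T) (fst y)) f = Some \<delta>" if f\<delta>: "(f, \<delta>) \<in> set \<alpha>" for f \<delta>
  proof -
    have "f \<in> fst ` set \<alpha>" using f\<delta> by (metis fst_conv image_eqI)
    then have "f \<in> fst ` set w" using attrs by blast
    then obtain \<delta>' where f\<delta>': "(f, \<delta>') \<in> set w" by auto
    have "map_of (zip (fst T) (fst y)) f = map_of (zip (fst T) (fst x)) f"
      using row_matches_value[OF xw f\<delta>'] row_matches_value[OF yw f\<delta>'] by simp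
    then show ?thesis using row_matches_value[OF xa f\<delta>] by simp
  qed
  then show "y \<in> Rows (sub T \<alpha>)" using y by (auto simp: Rows_sub row_matches_def)
qed

lemma Rows_sub_all_attributes_singleton:
  assumes v: "valid_table k T" and x: "x \<in> Rows (sub T w)" and attrs: "set (fst T) \<subseteq> fst ` set w"
  shows "Rows (sub T w) = {x}"
proof -
  have "y = x" if y: "y \<in> Rows (sub T w)" for y
  proof -
    have xT: "x \<in> Rows T" and yT: "y \<in> Rows T"
      and xw: "row_matches (fst T) (fst x) w" and yw: "row_matches (fst T) (fst y) w"
      using x y by (simp_all add: Rows_sub)
    have len: "length (fst y) = length (fst T)" "length (fst x) = length (fst T)"
      using valid_table_row[OF v, of "fst x" "snd x"] valid_table_row[OF v, of "fst y" "snd y"] xT yT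
      by auto
    have "map_of (zip (fst T) (fst y)) b = map_of (zip (fst T) (fst x)) b" for b
    proof (cases "b \<in> set (fst T)")
      case True
      then obtain \<delta> where b\<delta>: "(b, \<delta>) \<in> set w" using attrs by force
      show ?thesis using row_matches_value[OF xw b\<delta>] row_matches_value[OF yw b\<delta>] by simp
    qed (metis len map_of_zip_is_None)
    then have "fst y = fst x"
      using map_of_zip_inject[OF len] v by (auto simp: valid_table_def)
    moreover have "inj_on fst (Rows T)"
      using v by (simp add: valid_table_def Rows_def distinct_map)
    ultimately show "y = x" using xT yT by (auto dest: inj_onD)
  qed
  then show ?thesis using x by blast
qed

section \<open>Paths of decision trees\<close>

lemma path_of_Node_iff:
  "path_of (Node f es) w d \<longleftrightarrow> (\<exists>\<delta> c w'. w = (f, \<delta>) # w' \<and> (\<delta>, c) \<in> set es \<and> path_of c w' d)"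
proof
  assume "path_of (Node f es) w d"
  then show "\<exists>\<delta> c w'. w = (f, \<delta>) # w' \<and> (\<delta>, c) \<in> set es \<and> path_of c w' d"
    by (cases rule: path_of.cases) auto
qed (auto intro: path_of.intros)

lemma path_of_Leaf_iff: "path_of (Leaf e) w d \<longleftrightarrow> w = [] \<and> d = e"
  by (auto elim: path_of.cases intro: path_of.intros)

lemma wf_sub_has_path: "wf_sub k t \<Longrightarrow> \<exists>w d. path_of t w d"
proof (induction rule: wf_sub.induct)
  case (2 es f)
  then obtain \<delta> c where "(\<delta>, c) \<in> set es" by (cases es) auto
  with 2(2) show ?case by (meson path_of.intros(2))
qed (blast intro: path_of.intros)

lemma finite_paths: "wf_sub k t \<Longrightarrow> finite {(w, d). path_of t w d}"
proof (induction rule: wf_sub.induct)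
  case (1 d) then show ?case by (simp add: path_of_Leaf_iff)
next
  case (2 es f)
  have "{(w, d). path_of (Node f es) w d}
        \<subseteq> (\<Union>(\<delta>, c)\<in>set es. (\<lambda>(w, d). ((f, \<delta>) # w, d)) ` {(w, d). path_of c w d})"
    by (force simp: path_of_Node_iff)
  moreover have "finite (\<Union>(\<delta>, c)\<in>set es. (\<lambda>(w, d). ((f, \<delta>) # w, d)) ` {(w, d). path_of c w d})"
    using 2(2) by auto
  ultimately show ?case by (rule finite_subset)
qed

lemma attr_in_if_path: "path_of t w d \<Longrightarrow> x \<in> set w \<Longrightarrow> attr_in (fst x) t"
  by (induction rule: path_of.induct) (auto intro: attr_in.intros)

lemma path_values_less: "path_of t w d \<Longrightarrow> wf_sub k t \<Longrightarrow> x \<in> set w \<Longrightarrow> snd x < k"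
  by (induction rule: path_of.induct) (auto elim: wf_sub.cases)

lemma card_path_decisions_le:
  assumes "wf_sub k t" "det_sub t" "\<And>w d. path_of t w d \<Longrightarrow> length w \<le> h" and k: "0 < k"
  shows "card {d. \<exists>w. path_of t w d} \<le> k ^ h"
  using assms(1-3)
proof (induction arbitrary: h rule: wf_sub.induct)
  case (1 d) then show ?case using k by (simp add: path_of_Leaf_iff)
next
  case (2 es f)
  from 2(3) have dist: "distinct (map fst es)" and det: "\<And>\<delta> c. (\<delta>, c) \<in> set es \<Longrightarrow> det_sub c"
    by (auto elim: det_sub.cases)
  obtain \<delta>0 c0 where "(\<delta>0, c0) \<in> set es" using 2(1) by (cases es) auto
  moreover obtain w0 d0 where "path_of c0 w0 d0" using 2(2) calculation wf_sub_has_path by blast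
  ultimately have "path_of (Node f es) ((f, \<delta>0) # w0) d0" by (auto simp: path_of_Node_iff)
  then have "length ((f, \<delta>0) # w0) \<le> h" by (rule 2(4))
  then obtain h' where h: "h = Suc h'" by (cases h) auto
  have IH: "card {d. \<exists>w. path_of c w d} \<le> k ^ h'" if "(\<delta>, c) \<in> set es" for \<delta> c
  proof -
    have "length w \<le> h'" if "path_of c w d" for w d
    proof -
      have "path_of (Node f es) ((f, \<delta>) # w) d"
        using \<open>(\<delta>, c) \<in> set es\<close> that by (auto simp: path_of_Node_iff)
      then show ?thesis using 2(4) h by fastforce
    qed
    then show ?thesis using 2(2) that det by blast
  qed
  have "card (set es) = card (fst ` set es)" using dist by (simp add: card_image distinct_map)
  also have "\<dots> \<le> card {..<k}" using 2(2) by (intro card_mono) auto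
  finally have card_es: "card (set es) \<le> k" by simp
  have "{d. \<exists>w. path_of (Node f es) w d} = (\<Union>x\<in>set es. {d. \<exists>w. path_of (snd x) w d})"
    by (force simp: path_of_Node_iff)
  then have "card {d. \<exists>w. path_of (Node f es) w d} \<le> (\<Sum>x\<in>set es. card {d. \<exists>w. path_of (snd x) w d})"
    by (simp add: card_UN_le)
  also have "\<dots> \<le> (\<Sum>x\<in>set es. k ^ h')" using IH by (intro sum_mono) (metis prod.collapse)
  also have "\<dots> \<le> k * k ^ h'" using card_es by simp
  finally show ?case using h by simp
qed

lemma finite_path_complexities:
  "k_tree k \<Gamma> \<Longrightarrow> finite {\<psi> (map fst w) | t w d. t \<in> set \<Gamma> \<and> path_of t w d}"
proof -
  assume kt: "k_tree k \<Gamma>"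
  have "{\<psi> (map fst w) | t w d. t \<in> set \<Gamma> \<and> path_of t w d} \<subseteq>
        (\<Union>t\<in>set \<Gamma>. (\<lambda>(w, d). \<psi> (map fst w)) ` {(w, d). path_of t w d})"
    by force
  moreover have "finite (\<Union>t\<in>set \<Gamma>. (\<lambda>(w, d). \<psi> (map fst w)) ` {(w, d). path_of t w d})"
    using kt finite_paths by (auto simp: k_tree_def)
  ultimately show ?thesis by (rule finite_subset)
qed

lemma path_complexity_le_psi_tree:
  "k_tree k \<Gamma> \<Longrightarrow> t \<in> set \<Gamma> \<Longrightarrow> path_of t w d \<Longrightarrow> \<psi> (map fst w) \<le> psi_tree \<psi> \<Gamma>"
  unfolding psi_tree_def by (rule Max_ge) (blast intro: finite_path_complexities)+

lemma psi_tree_le: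
  assumes kt: "k_tree k \<Gamma>" and le: "\<And>t w d. t \<in> set \<Gamma> \<Longrightarrow> path_of t w d \<Longrightarrow> \<psi> (map fst w) \<le> n"
  shows "psi_tree \<psi> \<Gamma> \<le> n"
proof -
  obtain t where t: "t \<in> set \<Gamma>" using kt unfolding k_tree_def by (cases \<Gamma>) auto
  then obtain w d where "path_of t w d" using kt wf_sub_has_path unfolding k_tree_def by blast
  then have "{\<psi> (map fst w) | t w d. t \<in> set \<Gamma> \<and> path_of t w d} \<noteq> {}" using t by blast
  then show ?thesis
    unfolding psi_tree_def using Max_le_iff[OF finite_path_complexities[OF kt]] le by blast
qed

definition tree_decisions :: "ktree \<Rightarrow> nat set" where
  "tree_decisions \<Gamma> = {d. \<exists>t\<in>set \<Gamma>. \<exists>w. path_of t w d}"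

lemma card_tree_decisions_le:
  assumes bcm: "bounded_complexity_measure \<psi>" and k: "0 < k" and dt: "det_tree k T \<Gamma>"
  shows "card (tree_decisions \<Gamma>) \<le> k ^ psi_tree \<psi> \<Gamma>"
proof -
  obtain t where \<Gamma>: "\<Gamma> = [t]" using dt unfolding det_tree_def by (cases \<Gamma>) auto
  have kt: "k_tree k \<Gamma>" and det: "det_sub t" using dt \<Gamma> by (auto simp: det_tree_def nondet_tree_def)
  then have wf: "wf_sub k t" using \<Gamma> by (simp add: k_tree_def)
  have "length w \<le> psi_tree \<psi> \<Gamma>" if "path_of t w d" for w d
  proof -
    have "length (map fst w) \<le> \<psi> (map fst w)"
      using bcm unfolding bounded_complexity_measure_def by blast
    also have "\<dots> \<le> psi_tree \<psi> \<Gamma>" using path_complexity_le_psi_tree[OF kt _ that] \<Gamma> by simp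
    finally show ?thesis by simp
  qed
  then show ?thesis
    using card_path_decisions_le[OF wf det _ k] \<Gamma> by (simp add: tree_decisions_def)
qed

lemma finite_tree_decisions: "k_tree k \<Gamma> \<Longrightarrow> finite (tree_decisions \<Gamma>)"
proof -
  assume kt: "k_tree k \<Gamma>"
  have "tree_decisions \<Gamma> \<subseteq> (\<Union>t\<in>set \<Gamma>. snd ` {(w, d). path_of t w d})"
    unfolding tree_decisions_def by force
  moreover have "finite (\<Union>t\<in>set \<Gamma>. snd ` {(w, d). path_of t w d})"
    using kt finite_paths by (auto simp: k_tree_def)
  ultimately show ?thesis by (rule finite_subset)
qed

lemma nondet_tree_row_decision:
  assumes "nondet_tree k T \<Gamma>" and "x \<in> Rows T"
  shows "\<exists>d\<in>snd x. d \<in> tree_decisions \<Gamma>"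
proof -
  obtain t w d where t: "t \<in> set \<Gamma>" "path_of t w d" and x: "x \<in> Rows (sub T w)"
    using assms unfolding nondet_tree_def by blast
  then have "d \<in> Pi_dec (sub T w)"
    using assms(1) sub_eq_empty_iff unfolding nondet_tree_def by blast
  then show ?thesis using x t by (auto simp: Pi_dec_eq_Inter_Rows tree_decisions_def)
qed

fun path_tree :: "(nat \<times> nat) list \<Rightarrow> nat \<Rightarrow> Defs.dtree" where
  "path_tree [] d = Leaf d"
| "path_tree ((f, \<delta>) # \<alpha>) d = Node f [(\<delta>, path_tree \<alpha> d)]"

lemma path_of_path_tree_iff: "path_of (path_tree \<alpha> e) w d \<longleftrightarrow> w = \<alpha> \<and> d = e"
  by (induction \<alpha> e arbitrary: w rule: path_tree.induct) (auto simp: path_of_Leaf_iff path_of_Node_iff)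

lemma wf_sub_path_tree: "\<forall>x\<in>set \<alpha>. snd x < k \<Longrightarrow> wf_sub k (path_tree \<alpha> e)"
  by (induction \<alpha> e rule: path_tree.induct) (auto intro: wf_sub.intros)

lemma attr_in_path_tree: "attr_in a (path_tree \<alpha> e) \<Longrightarrow> a \<in> fst ` set \<alpha>"
  by (induction \<alpha> e rule: path_tree.induct) (auto elim: attr_in.cases)

fun full_tree :: "nat \<Rightarrow> ((nat \<times> nat) list \<Rightarrow> nat) \<Rightarrow> nat list \<Rightarrow> (nat \<times> nat) list \<Rightarrow> Defs.dtree" where
  "full_tree k g [] acc = Leaf (g acc)"
| "full_tree k g (b # bs) acc = Node b (map (\<lambda>\<delta>. (\<delta>, full_tree k g bs (acc @ [(b, \<delta>)]))) [0..<k])"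

lemma path_of_full_tree_iff:
  "path_of (full_tree k g bs acc) w d \<longleftrightarrow> map fst w = bs \<and> (\<forall>x\<in>set w. snd x < k) \<and> d = g (acc @ w)"
proof (induction bs arbitrary: acc w)
  case Nil then show ?case by (auto simp: path_of_Leaf_iff)
next
  case (Cons b bs)
  show ?case
  proof
    assume "path_of (full_tree k g (b # bs) acc) w d"
    then obtain \<delta> w' where "w = (b, \<delta>) # w'" "\<delta> < k" "path_of (full_tree k g bs (acc @ [(b, \<delta>)])) w' d"
      by (auto simp: path_of_Node_iff)
    then show "map fst w = b # bs \<and> (\<forall>x\<in>set w. snd x < k) \<and> d = g (acc @ w)"
      using Cons.IH by auto
  next
    assume w: "map fst w = b # bs \<and> (\<forall>x\<in>set w. snd x < k) \<and> d = g (acc @ w)"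
    then obtain \<delta> w' where w': "w = (b, \<delta>) # w'" by (cases w) auto
    then have "path_of (full_tree k g bs (acc @ [(b, \<delta>)])) w' d" using w Cons.IH by auto
    moreover have "(\<delta>, full_tree k g bs (acc @ [(b, \<delta>)]))
        \<in> set (map (\<lambda>\<delta>. (\<delta>, full_tree k g bs (acc @ [(b, \<delta>)]))) [0..<k])"
      using w w' by auto
    ultimately show "path_of (full_tree k g (b # bs) acc) w d"
      unfolding w' full_tree.simps by (rule path_of.intros(2)[rotated])
  qed
qed

lemma wf_sub_full_tree: "0 < k \<Longrightarrow> wf_sub k (full_tree k g bs acc)"
  by (induction bs arbitrary: acc) (auto intro!: wf_sub.intros)

lemma det_sub_full_tree: "det_sub (full_tree k g bs acc)"
  by (induction bs arbitrary: acc) (auto intro!: det_sub.intros simp: comp_def)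

lemma attr_in_full_tree: "attr_in a (full_tree k g bs acc) \<Longrightarrow> a \<in> set bs"
proof (induction bs arbitrary: acc)
  case (Cons b bs)
  from Cons.prems have "a = b \<or> (\<exists>\<delta>. attr_in a (full_tree k g bs (acc @ [(b, \<delta>)])))"
    unfolding full_tree.simps by (cases rule: attr_in.cases) auto
  then show ?case using Cons.IH by auto
qed (auto elim: attr_in.cases)

lemma row_matching_word:
  assumes v: "valid_table k T" and r: "(r, D) \<in> Rows T" and bs: "set bs \<subseteq> At T"
  shows "\<exists>w. map fst w = bs \<and> (\<forall>x\<in>set w. snd x < k) \<and> row_matches (fst T) r w"
proof -
  have len: "length r = length (fst T)" and rk: "\<forall>v\<in>set r. v < k"
    using valid_table_row[OF v r] by auto
  define w where "w = map (\<lambda>b. (b, the (map_of (zip (fst T) r) b))) bs"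
  have "map_of (zip (fst T) r) b = Some (the (map_of (zip (fst T) r) b))
        \<and> the (map_of (zip (fst T) r) b) < k" if "b \<in> set bs" for b
    using map_of_zip_row[OF len] that bs rk by (fastforce simp: At_def)
  then have "(\<forall>x\<in>set w. snd x < k) \<and> row_matches (fst T) r w"
    unfolding w_def row_matches_def by auto
  moreover have "map fst w = bs" unfolding w_def by (simp add: comp_def)
  ultimately show ?thesis by blast
qed

lemma full_tree_det_tree:
  assumes v: "valid_table k T" and k: "0 < k" and bs: "set bs \<subseteq> At T"
    and decisive: "\<And>w. map fst w = bs \<Longrightarrow> \<forall>x\<in>set w. snd x < k \<Longrightarrow> Rows (sub T w) \<noteq> {}
                       \<Longrightarrow> Pi_dec (sub T w) \<noteq> {}"
  shows "\<exists>\<Gamma>. det_tree k T \<Gamma> \<and> psi_tree \<psi> \<Gamma> = \<psi> bs"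
proof -
  define t where "t = full_tree k (\<lambda>w. SOME d. d \<in> Pi_dec (sub T w)) bs []"
  have kt: "k_tree k [t]" unfolding k_tree_def t_def using wf_sub_full_tree[OF k] by simp
  have det: "det_sub t" unfolding t_def by (rule det_sub_full_tree)
  have "At_tree [t] \<subseteq> At T" unfolding At_tree_def t_def using attr_in_full_tree bs by auto
  moreover have "\<exists>w d. path_of t w d \<and> x \<in> Rows (sub T w)" if x: "x \<in> Rows T" for x
  proof -
    obtain w where "map fst w = bs" "\<forall>x\<in>set w. snd x < k" "row_matches (fst T) (fst x) w"
      using row_matching_word[OF v _ bs, of "fst x" "snd x"] x by auto
    then show ?thesis using x unfolding t_def path_of_full_tree_iff by (auto simp: Rows_sub)
  qed
  moreover have "sub T w = empty_table \<or> d \<in> Pi_dec (sub T w)" if "path_of t w d" for w d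
  proof (cases "sub T w = empty_table")
    case False
    then have "Pi_dec (sub T w) \<noteq> {}"
      using that decisive sub_eq_empty_iff unfolding t_def path_of_full_tree_iff by blast
    then show ?thesis using that unfolding t_def path_of_full_tree_iff by (simp add: some_in_eq)
  qed simp
  moreover have "psi_tree \<psi> [t] = \<psi> bs"
  proof (rule antisym)
    show "psi_tree \<psi> [t] \<le> \<psi> bs"
      by (rule psi_tree_le[OF kt]) (simp add: t_def path_of_full_tree_iff)
    have "path_of t (map (\<lambda>b. (b, 0)) bs) (SOME d. d \<in> Pi_dec (sub T (map (\<lambda>b. (b, 0)) bs)))"
      unfolding t_def path_of_full_tree_iff using k by (simp add: comp_def)
    from path_complexity_le_psi_tree[OF kt _ this] show "\<psi> bs \<le> psi_tree \<psi> [t]"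
      by (simp add: comp_def)
  qed
  ultimately show ?thesis
    using kt det unfolding det_tree_def nondet_tree_def by (intro exI[of _ "[t]"]) auto
qed

lemma det_tree_exists:
  assumes v: "valid_table k T" and k: "0 < k"
  shows "\<exists>\<Gamma>. det_tree k T \<Gamma>"
proof -
  have "Pi_dec (sub T w) \<noteq> {}" if w: "map fst w = fst T" "Rows (sub T w) \<noteq> {}" for w
  proof -
    obtain x where x: "x \<in> Rows (sub T w)" using w(2) by blast
    moreover have "set (fst T) \<subseteq> fst ` set w" using w(1) by (metis set_map order_refl)
    ultimately have "Rows (sub T w) = {x}" by (rule Rows_sub_all_attributes_singleton[OF v])
    moreover have "snd x \<noteq> {}" using x valid_table_row[OF v, of "fst x" "snd x"] by (simp add: Rows_sub)
    ultimately show ?thesis by (simp add: Pi_dec_eq_Inter_Rows)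
  qed
  moreover have "set (fst T) \<subseteq> At T" by (simp add: At_def)
  ultimately show ?thesis using full_tree_det_tree[OF v k, of "fst T"] by blast
qed

lemma psi_a_attained:
  assumes "valid_table k T" "0 < k" "T \<noteq> empty_table"
  shows "\<exists>\<Gamma>. nondet_tree k T \<Gamma> \<and> psi_tree \<psi> \<Gamma> = psi_a \<psi> k T"
proof -
  have "\<exists>n \<Gamma>. nondet_tree k T \<Gamma> \<and> psi_tree \<psi> \<Gamma> = n"
    using det_tree_exists[OF assms(1,2)] by (auto simp: det_tree_def)
  from LeastI_ex[OF this] show ?thesis unfolding psi_a_def using assms(3) by simp
qed

lemma psi_d_attained:
  assumes "valid_table k T" "0 < k" "T \<noteq> empty_table"
  shows "\<exists>\<Gamma>. det_tree k T \<Gamma> \<and> psi_tree \<psi> \<Gamma> = psi_d \<psi> k T"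
proof -
  have "\<exists>n \<Gamma>. det_tree k T \<Gamma> \<and> psi_tree \<psi> \<Gamma> = n" using det_tree_exists[OF assms(1,2)] by auto
  from LeastI_ex[OF this] show ?thesis unfolding psi_d_def using assms(3) by simp
qed

lemma psi_d_le_psi_tree: "det_tree k T \<Gamma> \<Longrightarrow> psi_d \<psi> k T \<le> psi_tree \<psi> \<Gamma>"
  unfolding psi_d_def by (simp add: Least_le exI)

lemma psi_a_le_psi_tree: "nondet_tree k T \<Gamma> \<Longrightarrow> psi_a \<psi> k T \<le> psi_tree \<psi> \<Gamma>"
  unfolding psi_a_def by (simp add: Least_le exI)

lemma complexity_measureD:
  assumes "complexity_measure \<psi>"
  shows "\<psi> [] = 0" and "mset a = mset b \<Longrightarrow> \<psi> a = \<psi> b"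
    and "\<psi> a \<le> \<psi> (a @ b)" and "\<psi> (a @ b) \<le> \<psi> a + \<psi> b"
  using assms unfolding complexity_measure_def by blast+

lemma finite_Omega_n:
  assumes "bounded_complexity_measure \<psi>"
  shows "finite (Omega_n \<psi> k T n)"
proof -
  have "Omega_n \<psi> k T n \<subseteq> {xs. set xs \<subseteq> At T \<times> {..<k} \<and> length xs \<le> n}"
  proof
    fix \<alpha> assume \<alpha>: "\<alpha> \<in> Omega_n \<psi> k T n"
    have "length (map fst \<alpha>) \<le> \<psi> (map fst \<alpha>)"
      using assms unfolding bounded_complexity_measure_def by blast
    then show "\<alpha> \<in> {xs. set xs \<subseteq> At T \<times> {..<k} \<and> length xs \<le> n}"
      using \<alpha> unfolding Omega_n_def Omega_def by auto
  qed
  moreover have "finite {xs. set xs \<subseteq> At T \<times> {..<k} \<and> length xs \<le> n}"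
    by (rule finite_lists_length_le) (simp add: At_def)
  ultimately show ?thesis by (rule finite_subset)
qed

lemma irred_cover_subset_exists: "is_cover \<psi> k T n U0 \<Longrightarrow> \<exists>U\<subseteq>U0. irred_cover \<psi> k T n U"
proof (induction "card U0" arbitrary: U0 rule: less_induct)
  case less
  show ?case
  proof (cases "irred_cover \<psi> k T n U0")
    case False
    then obtain V where V: "V \<subset> U0" "is_cover \<psi> k T n V"
      using less.prems unfolding irred_cover_def by blast
    have "card V < card U0" using V(1) less.prems by (simp add: is_cover_def psubset_card_mono)
    then obtain U where "U \<subseteq> V" "irred_cover \<psi> k T n U" using less.hyps V(2) by blast
    then show ?thesis using V(1) by blast
  qed blast
qed

lemma Omega_n_is_cover:
  assumes "bounded_complexity_measure \<psi>"
  shows "is_cover \<psi> k T n (Omega_n \<psi> k T n)"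
proof -
  have "\<psi> [] = 0" using assms complexity_measureD(1) by (simp add: bounded_complexity_measure_def)
  then have "[] \<in> Omega_n \<psi> k T n" unfolding Omega_n_def Omega_def by simp
  moreover have "Rows (sub T []) = Rows T" by (auto simp: Rows_sub row_matches_def)
  moreover have "Rows (sub T \<alpha>) \<subseteq> Rows T" for \<alpha> by (simp add: Rows_sub)
  ultimately have "(\<Union>\<alpha>\<in>Omega_n \<psi> k T n. Rows (sub T \<alpha>)) = Rows T" by blast
  then show ?thesis unfolding is_cover_def using finite_Omega_n[OF assms] by simp
qed

lemma finite_irred_cover_cards:
  assumes "bounded_complexity_measure \<psi>"
  shows "finite {card U | U. irred_cover \<psi> k T n U}"
proof -
  have "{card U | U. irred_cover \<psi> k T n U} \<subseteq> card ` Pow (Omega_n \<psi> k T n)"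
    unfolding irred_cover_def is_cover_def by blast
  then show ?thesis by (rule finite_subset) (simp add: finite_Omega_n[OF assms])
qed

lemma card_irred_cover_le_l_psi:
  assumes "bounded_complexity_measure \<psi>" "T \<noteq> empty_table" "irred_cover \<psi> k T n U"
  shows "card U \<le> l_psi \<psi> k T n"
proof -
  have "card U \<le> Max {card U | U. irred_cover \<psi> k T n U}"
    by (rule Max_ge[OF finite_irred_cover_cards[OF assms(1)]]) (use assms(3) in blast)
  then show ?thesis unfolding l_psi_def using assms(2) by simp
qed

lemma l_psi_attained:
  assumes "bounded_complexity_measure \<psi>" "T \<noteq> empty_table"
  shows "\<exists>U. irred_cover \<psi> k T n U \<and> card U = l_psi \<psi> k T n"
proof -
  have "{card U | U. irred_cover \<psi> k T n U} \<noteq> {}"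
    using irred_cover_subset_exists[OF Omega_n_is_cover[OF assms(1)]] by blast
  from Max_in[OF finite_irred_cover_cards[OF assms(1)] this] obtain U
    where "irred_cover \<psi> k T n U" "card U = Max {card U | U. irred_cover \<psi> k T n U}"
    by auto
  then show ?thesis unfolding l_psi_def using assms(2) by auto
qed

lemma complexity_measure_concat_le:
  "complexity_measure \<psi> \<Longrightarrow> \<psi> (concat xs) \<le> sum_list (map \<psi> xs)"
proof (induction xs)
  case (Cons x xs)
  have "\<psi> (x @ concat xs) \<le> \<psi> x + \<psi> (concat xs)" by (rule complexity_measureD(4)[OF Cons.prems])
  then show ?case using Cons by simp
qed (simp add: complexity_measureD(1))

lemma complexity_measure_mono:
  assumes cm: "complexity_measure \<psi>" and d: "distinct bs" and s: "set bs \<subseteq> set ys"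
  shows "\<psi> bs \<le> \<psi> ys"
proof -
  have "count (mset bs) a \<le> count (mset ys) a" for a
    using d s by (cases "a \<in> set bs") (auto simp: distinct_count_atmost_1 Suc_le_eq)
  then obtain C where "mset ys = mset bs + C" by (metis mset_subset_eqI mset_subset_eq_exists_conv)
  moreover obtain rest where "mset rest = C" using ex_mset by blast
  ultimately have "\<psi> ys = \<psi> (bs @ rest)" using complexity_measureD(2)[OF cm] by simp
  then show ?thesis using complexity_measureD(3)[OF cm] by simp
qed

lemma complexity_measure_le_sum:
  assumes cm: "complexity_measure \<psi>" and U: "finite U"
    and bs: "distinct bs" "set bs = (\<Union>\<alpha>\<in>U. set (f \<alpha>))"
  shows "\<psi> bs \<le> (\<Sum>\<alpha>\<in>U. \<psi> (f \<alpha>))"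
proof -
  obtain xs where xs: "set xs = U" "distinct xs" using finite_distinct_list[OF U] by blast
  have "\<psi> bs \<le> \<psi> (concat (map f xs))"
    using complexity_measure_mono[OF cm bs(1)] bs(2) xs(1) by simp
  also have "\<dots> \<le> sum_list (map \<psi> (map f xs))" by (rule complexity_measure_concat_le[OF cm])
  also have "\<dots> = (\<Sum>\<alpha>\<in>U. \<psi> (f \<alpha>))"
    using sum_list_distinct_conv_sum_set[OF xs(2), of "\<lambda>\<alpha>. \<psi> (f \<alpha>)"] xs(1) by (simp add: comp_def)
  finally show ?thesis .
qed

section \<open>Deterministic complexity bounded via irreducible covers\<close>

lemma tree_words_is_cover:
  assumes nd: "nondet_tree k T \<Gamma>" and le: "psi_tree \<psi> \<Gamma> \<le> n"
  shows "is_cover \<psi> k T n {w. \<exists>t\<in>set \<Gamma>. \<exists>d. path_of t w d}"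
proof -
  have kt: "k_tree k \<Gamma>" and at: "At_tree \<Gamma> \<subseteq> At T"
    and cov: "\<forall>x\<in>Rows T. \<exists>t\<in>set \<Gamma>. \<exists>w d. path_of t w d \<and> x \<in> Rows (sub T w)"
    using nd unfolding nondet_tree_def by blast+
  have "finite {w. \<exists>t\<in>set \<Gamma>. \<exists>d. path_of t w d}"
  proof (rule finite_subset)
    show "{w. \<exists>t\<in>set \<Gamma>. \<exists>d. path_of t w d} \<subseteq> (\<Union>t\<in>set \<Gamma>. fst ` {(w, d). path_of t w d})"
      by force
    show "finite (\<Union>t\<in>set \<Gamma>. fst ` {(w, d). path_of t w d})"
      using kt finite_paths unfolding k_tree_def by blast
  qed
  moreover have "w \<in> Omega_n \<psi> k T n" if t: "t \<in> set \<Gamma>" "path_of t w d" for t w d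
  proof -
    have wf: "wf_sub k t" using kt t(1) by (simp add: k_tree_def)
    have "fst x \<in> At T \<and> snd x < k" if x: "x \<in> set w" for x
    proof
      have "fst x \<in> At_tree \<Gamma>" using attr_in_if_path[OF t(2) x] t(1) unfolding At_tree_def by blast
      then show "fst x \<in> At T" using at by blast
      show "snd x < k" by (rule path_values_less[OF t(2) wf x])
    qed
    moreover have "\<psi> (map fst w) \<le> n" using order_trans[OF path_complexity_le_psi_tree[OF kt t] le] .
    ultimately show ?thesis unfolding Omega_n_def Omega_def by auto
  qed
  moreover have "(\<Union>w\<in>{w. \<exists>t\<in>set \<Gamma>. \<exists>d. path_of t w d}. Rows (sub T w)) = Rows T"
  proof
    show "(\<Union>w\<in>{w. \<exists>t\<in>set \<Gamma>. \<exists>d. path_of t w d}. Rows (sub T w)) \<subseteq> Rows T"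
      by (auto simp: Rows_sub)
    show "Rows T \<subseteq> (\<Union>w\<in>{w. \<exists>t\<in>set \<Gamma>. \<exists>d. path_of t w d}. Rows (sub T w))"
    proof
      fix x assume "x \<in> Rows T"
      then obtain t w d where "t \<in> set \<Gamma>" "path_of t w d" "x \<in> Rows (sub T w)" using cov by blast
      then show "x \<in> (\<Union>w\<in>{w. \<exists>t\<in>set \<Gamma>. \<exists>d. path_of t w d}. Rows (sub T w))" by blast
    qed
  qed
  ultimately show ?thesis unfolding is_cover_def by blast
qed

lemma Pi_dec_nonempty_if_refines_tree_cover:
  assumes nd: "nondet_tree k T \<Gamma>" and U: "U \<subseteq> {w. \<exists>t\<in>set \<Gamma>. \<exists>d. path_of t w d}"
    and cov: "(\<Union>\<alpha>\<in>U. Rows (sub T \<alpha>)) = Rows T"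
    and attrs: "\<And>\<alpha>. \<alpha> \<in> U \<Longrightarrow> fst ` set \<alpha> \<subseteq> fst ` set w"
    and ne: "Rows (sub T w) \<noteq> {}"
  shows "Pi_dec (sub T w) \<noteq> {}"
proof -
  obtain x where x: "x \<in> Rows (sub T w)" using ne by blast
  then obtain \<alpha> where \<alpha>: "\<alpha> \<in> U" "x \<in> Rows (sub T \<alpha>)" using cov by (auto simp: Rows_sub)
  then obtain t d where "t \<in> set \<Gamma>" "path_of t \<alpha> d" using U by blast
  then have "d \<in> Pi_dec (sub T \<alpha>)"
    using nd \<alpha>(2) sub_eq_empty_iff unfolding nondet_tree_def by blast
  moreover have "Rows (sub T w) \<subseteq> Rows (sub T \<alpha>)"
    using Rows_sub_subset[OF x \<alpha>(2) attrs[OF \<alpha>(1)]] .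
  ultimately have "d \<in> Pi_dec (sub T w)" by (auto simp: Pi_dec_eq_Inter_Rows)
  then show ?thesis by blast
qed

lemma psi_d_le_irred_cover_bound:
  assumes bcm: "bounded_complexity_measure \<psi>" and k: "0 < k" and v: "valid_table k T"
    and ne: "T \<noteq> empty_table" and pa: "psi_a \<psi> k T \<le> n"
    and bound: "\<And>U. irred_cover \<psi> k T n U \<Longrightarrow> card U \<le> B"
  shows "psi_d \<psi> k T \<le> B * n"
proof -
  have cm: "complexity_measure \<psi>" using bcm unfolding bounded_complexity_measure_def by simp
  obtain \<Gamma> where nd: "nondet_tree k T \<Gamma>" and "psi_tree \<psi> \<Gamma> = psi_a \<psi> k T"
    using psi_a_attained[OF v k ne] by blast
  then have "is_cover \<psi> k T n {w. \<exists>t\<in>set \<Gamma>. \<exists>d. path_of t w d}"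
    using tree_words_is_cover pa by simp
  from irred_cover_subset_exists[OF this] obtain U
    where U: "U \<subseteq> {w. \<exists>t\<in>set \<Gamma>. \<exists>d. path_of t w d}" and irr: "irred_cover \<psi> k T n U"
    by blast
  then have finU: "finite U" and UOm: "U \<subseteq> Omega_n \<psi> k T n"
    and cov: "(\<Union>\<alpha>\<in>U. Rows (sub T \<alpha>)) = Rows T"
    unfolding irred_cover_def is_cover_def by auto
  define bs where "bs = sorted_list_of_set (\<Union>\<alpha>\<in>U. set (map fst \<alpha>))"
  have set_bs: "set bs = (\<Union>\<alpha>\<in>U. set (map fst \<alpha>))" and "distinct bs"
    unfolding bs_def using finU by simp_all
  have "set bs \<subseteq> At T" using UOm unfolding set_bs Omega_n_def Omega_def by fastforce
  moreover have "Pi_dec (sub T w) \<noteq> {}" if w: "map fst w = bs" "Rows (sub T w) \<noteq> {}" for w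
  proof (rule Pi_dec_nonempty_if_refines_tree_cover[OF nd U cov _ w(2)])
    fix \<alpha> assume "\<alpha> \<in> U"
    then have "set (map fst \<alpha>) \<subseteq> set (map fst w)" using w(1) set_bs by auto
    then show "fst ` set \<alpha> \<subseteq> fst ` set w" by simp
  qed
  ultimately obtain \<Gamma>d where "det_tree k T \<Gamma>d" "psi_tree \<psi> \<Gamma>d = \<psi> bs"
    using full_tree_det_tree[OF v k] by metis
  then have "psi_d \<psi> k T \<le> \<psi> bs" using psi_d_le_psi_tree by metis
  also have "\<psi> bs \<le> (\<Sum>\<alpha>\<in>U. \<psi> (map fst \<alpha>))"
    using complexity_measure_le_sum[OF cm finU \<open>distinct bs\<close> set_bs] .
  also have "\<dots> \<le> (\<Sum>\<alpha>\<in>U. n)" using UOm by (intro sum_mono) (auto simp: Omega_n_def)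
  also have "\<dots> \<le> B * n" using bound[OF irr] by simp
  finally show ?thesis .
qed

section \<open>Irreducible covers bounded via deterministic complexity\<close>

lemma dedup_id: "distinct (map fst xs) \<Longrightarrow> dedup xs = xs"
proof (induction xs rule: dedup.induct)
  case (2 r d xs)
  then have "filter (\<lambda>(r', _). r' \<noteq> r) xs = xs" by (force intro: filter_True)
  then show ?case using 2 by simp
qed simp

lemma I_op_empty:
  assumes v: "valid_table k T" and ne: "fst T \<noteq> []"
  shows "I_op {} T = T"
proof -
  have "map (\<lambda>(r, d). (proj {} (fst T) r, d)) (snd T) = snd T"
  proof (rule map_idI)
    fix x assume "x \<in> set (snd T)"
    then have "length (fst x) = length (fst T)"
      using valid_table_row[OF v, of "fst x" "snd x"] by (simp add: Rows_def)
    then show "(\<lambda>(r, d). (proj {} (fst T) r, d)) x = x" by (simp add: proj_def case_prod_beta)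
  qed
  then show ?thesis
    using ne v unfolding I_op_def valid_table_def by (simp add: dedup_id)
qed

lemma J_op_mem_closed_class:
  assumes cl: "closed_class k A" and T: "T \<in> A" "T \<noteq> empty_table"
    and \<nu>: "\<And>r. finite (\<nu> r) \<and> \<nu> r \<noteq> {}"
  shows "J_op \<nu> T \<in> A"
proof -
  have v: "valid_table k T" using cl T(1) by (auto simp: closed_class_def M_inf_def)
  then have "fst T \<noteq> []" using T(2) by (cases T) (auto simp: valid_table_def empty_table_def)
  then have "J_op \<nu> T \<in> closure1 k T"
    unfolding closure1_def using I_op_empty[OF v] \<nu> by (intro CollectI exI[of _ "{}"] exI[of _ \<nu>]) simp
  then show ?thesis using cl T(1) unfolding closed_class_def closure_def by blast
qed

lemma Rows_J_op: "Rows (J_op \<nu> T) = (\<lambda>x. (fst x, \<nu> (fst x))) ` Rows T"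
  by (simp add: J_op_def Rows_def case_prod_beta)

lemma Rows_sub_J_op:
  "Rows (sub (J_op \<nu> T) \<alpha>) = (\<lambda>x. (fst x, \<nu> (fst x))) ` Rows (sub T \<alpha>)"
proof -
  have "fst (J_op \<nu> T) = fst T" by (simp add: J_op_def)
  then show ?thesis unfolding Rows_sub Rows_J_op by auto
qed

lemma is_cover_J_op: "is_cover \<psi> k T n U \<Longrightarrow> is_cover \<psi> k (J_op \<nu> T) n U"
proof -
  have "At (J_op \<nu> T) = At T" by (simp add: At_def J_op_def)
  then show "is_cover \<psi> k T n U \<Longrightarrow> is_cover \<psi> k (J_op \<nu> T) n U"
    unfolding is_cover_def Omega_n_def Omega_def Rows_sub_J_op Rows_J_op by (simp add: image_UN[symmetric])
qed

lemma psi_a_le_if_decisive_cover: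
  assumes v: "valid_table k T" and ne: "T \<noteq> empty_table" and cover: "is_cover \<psi> k T n U"
    and decisive: "\<And>\<alpha>. \<alpha> \<in> U \<Longrightarrow> dec \<alpha> \<in> Pi_dec (sub T \<alpha>)"
  shows "psi_a \<psi> k T \<le> n"
proof -
  have finU: "finite U" and UOm: "U \<subseteq> Omega_n \<psi> k T n" and cov: "(\<Union>\<alpha>\<in>U. Rows (sub T \<alpha>)) = Rows T"
    using cover unfolding is_cover_def by auto
  obtain xs where xs: "set xs = U" using finite_list[OF finU] by blast
  define \<Gamma> where "\<Gamma> = map (\<lambda>\<alpha>. path_tree \<alpha> (dec \<alpha>)) xs"
  have paths: "t \<in> set \<Gamma> \<and> path_of t w d \<longleftrightarrow> w \<in> U \<and> t = path_tree w (dec w) \<and> d = dec w" for t w d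
    unfolding \<Gamma>_def using xs by (auto simp: path_of_path_tree_iff)
  have letters: "fst x \<in> At T \<and> snd x < k" if "\<alpha> \<in> U" "x \<in> set \<alpha>" for \<alpha> x
  proof -
    have "\<forall>(f, \<delta>)\<in>set \<alpha>. f \<in> At T \<and> \<delta> < k" using that(1) UOm unfolding Omega_n_def Omega_def by blast
    then show ?thesis using that(2) by (cases x) auto
  qed
  have "U \<noteq> {}" using cov valid_table_Rows_nonempty[OF v ne] by auto
  then have kt: "k_tree k \<Gamma>"
    unfolding k_tree_def \<Gamma>_def using xs letters by (auto intro!: wf_sub_path_tree)
  have "At_tree \<Gamma> \<subseteq> At T"
    unfolding At_tree_def \<Gamma>_def using xs letters by (auto dest!: attr_in_path_tree)
  moreover have "\<exists>t\<in>set \<Gamma>. \<exists>w d. path_of t w d \<and> x \<in> Rows (sub T w)" if "x \<in> Rows T" for x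
    using that cov paths by blast
  moreover have "d \<in> Pi_dec (sub T w)" if "t \<in> set \<Gamma>" "path_of t w d" for t w d
  proof -
    have "w \<in> U" "d = dec w" using paths[of t w d] that by auto
    then show ?thesis using decisive by simp
  qed
  ultimately have "nondet_tree k T \<Gamma>" using kt unfolding nondet_tree_def by blast
  moreover have "psi_tree \<psi> \<Gamma> \<le> n"
    using psi_tree_le[OF kt] paths UOm unfolding Omega_n_def by blast
  ultimately show ?thesis using psi_a_le_psi_tree order_trans by blast
qed

lemma irred_cover_private_row:
  assumes irr: "irred_cover \<psi> k T n U" and \<alpha>: "\<alpha> \<in> U"
  shows "\<exists>x\<in>Rows T. {\<beta>\<in>U. row_matches (fst T) (fst x) \<beta>} = {\<alpha>}"
proof -
  have finU: "finite U" and UOm: "U \<subseteq> Omega_n \<psi> k T n" and cov: "(\<Union>\<beta>\<in>U. Rows (sub T \<beta>)) = Rows T"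
    using irr unfolding irred_cover_def is_cover_def by auto
  have "\<not> is_cover \<psi> k T n (U - {\<alpha>})" using irr \<alpha> unfolding irred_cover_def by blast
  then have "(\<Union>\<beta>\<in>U - {\<alpha>}. Rows (sub T \<beta>)) \<noteq> Rows T" using finU UOm unfolding is_cover_def by auto
  moreover have "(\<Union>\<beta>\<in>U - {\<alpha>}. Rows (sub T \<beta>)) \<subseteq> Rows T" by (auto simp: Rows_sub)
  ultimately obtain x where x: "x \<in> Rows T" "\<And>\<beta>. \<beta> \<in> U - {\<alpha>} \<Longrightarrow> x \<notin> Rows (sub T \<beta>)" by blast
  then have "{\<beta>\<in>U. row_matches (fst T) (fst x) \<beta>} \<subseteq> {\<alpha>}" by (auto simp: Rows_sub)
  moreover have "{\<beta>\<in>U. row_matches (fst T) (fst x) \<beta>} \<noteq> {}" using x cov by (auto simp: Rows_sub)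
  ultimately show ?thesis using x(1) by blast
qed

lemma irred_cover_card_le_pow_psi_d:
  assumes bcm: "bounded_complexity_measure \<psi>" and k: "0 < k" and cl: "closed_class k A"
    and T: "T \<in> A" "T \<noteq> empty_table" and irr: "irred_cover \<psi> k T n U"
  shows "\<exists>T'\<in>A. psi_a \<psi> k T' \<le> n \<and> card U \<le> k ^ psi_d \<psi> k T'"
proof -
  have cover: "is_cover \<psi> k T n U" and finU: "finite U" using irr by (auto simp: irred_cover_def is_cover_def)
  \<comment> \<open>The dummy label \<open>{0}\<close> is only needed because \<open>J_op\<close> demands nonempty decision sets
    for all tuples; rows of \<open>T\<close> always match some word of the cover \<open>U\<close>.\<close>
  define \<nu> where
    "\<nu> r = (let S = to_nat ` {\<beta>\<in>U. row_matches (fst T) r \<beta>} in if S = {} then {0} else S)" for r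
  define T' where "T' = J_op \<nu> T"
  have \<nu>_ok: "finite (\<nu> r) \<and> \<nu> r \<noteq> {}" for r unfolding \<nu>_def Let_def using finU by simp
  have T'A: "T' \<in> A" unfolding T'_def using J_op_mem_closed_class[OF cl T \<nu>_ok] .
  then have v': "valid_table k T'" using cl by (auto simp: closed_class_def M_inf_def)
  have ne': "T' \<noteq> empty_table" using T(2) by (cases T) (auto simp: T'_def J_op_def empty_table_def)
  have "to_nat \<alpha> \<in> Pi_dec (sub T' \<alpha>)" if "\<alpha> \<in> U" for \<alpha>
    using that unfolding T'_def Pi_dec_eq_Inter_Rows Rows_sub_J_op by (auto simp: Rows_sub \<nu>_def)
  then have pa: "psi_a \<psi> k T' \<le> n"
    using psi_a_le_if_decisive_cover[OF v' ne'] is_cover_J_op[OF cover] unfolding T'_def by blast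
  obtain \<Gamma> where dt: "det_tree k T' \<Gamma>" and pd: "psi_tree \<psi> \<Gamma> = psi_d \<psi> k T'"
    using psi_d_attained[OF v' k ne'] by blast
  have "to_nat \<alpha> \<in> tree_decisions \<Gamma>" if \<alpha>: "\<alpha> \<in> U" for \<alpha>
  proof -
    obtain x where x: "x \<in> Rows T" "{\<beta>\<in>U. row_matches (fst T) (fst x) \<beta>} = {\<alpha>}"
      using irred_cover_private_row[OF irr \<alpha>] by blast
    moreover have "\<nu> (fst x) = {to_nat \<alpha>}" using x(2) by (simp add: \<nu>_def)
    ultimately have "(fst x, {to_nat \<alpha>}) \<in> Rows T'" unfolding T'_def Rows_J_op by force
    then show ?thesis using nondet_tree_row_decision dt unfolding det_tree_def by fastforce
  qed
  then have "to_nat ` U \<subseteq> tree_decisions \<Gamma>" by blast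
  moreover have "finite (tree_decisions \<Gamma>)"
    using finite_tree_decisions dt unfolding det_tree_def nondet_tree_def by blast
  ultimately have "card (to_nat ` U) \<le> card (tree_decisions \<Gamma>)" by (rule card_mono[rotated])
  then have "card U \<le> card (tree_decisions \<Gamma>)" by (simp add: card_image inj_on_subset[OF inj_to_nat])
  also have "\<dots> \<le> k ^ psi_d \<psi> k T'" using card_tree_decisions_le[OF bcm k dt] pd by simp
  finally show ?thesis using T'A pa by blast
qed

lemma H_defined_if_L_defined:
  assumes bcm: "bounded_complexity_measure \<psi>" and k: "0 < k" and A: "A \<subseteq> M_inf k"
    and L: "L_defined \<psi> k A n"
  shows "H_defined \<psi> k A n"
proof -
  obtain B where B: "\<And>T. T \<in> A \<Longrightarrow> l_psi \<psi> k T n \<le> B"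
    using L unfolding L_defined_def finite_nat_set_iff_bounded_le by blast
  have "psi_d \<psi> k T \<le> B * n" if "T \<in> A" "psi_a \<psi> k T \<le> n" for T
  proof (cases "T = empty_table")
    case False
    have "valid_table k T" using A that(1) by (auto simp: M_inf_def)
    moreover have "card U \<le> B" if "irred_cover \<psi> k T n U" for U
      using card_irred_cover_le_l_psi[OF bcm False that] B[OF \<open>T \<in> A\<close>] by simp
    ultimately show ?thesis using psi_d_le_irred_cover_bound[OF bcm k _ False that(2)] by blast
  qed (simp add: psi_d_def)
  then show ?thesis unfolding H_defined_def finite_nat_set_iff_bounded_le by blast
qed

lemma L_defined_if_H_defined:
  assumes bcm: "bounded_complexity_measure \<psi>" and k: "0 < k" and cl: "closed_class k A"
    and H: "H_defined \<psi> k A n"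
  shows "L_defined \<psi> k A n"
proof -
  obtain B where B: "\<And>T. T \<in> A \<Longrightarrow> psi_a \<psi> k T \<le> n \<Longrightarrow> psi_d \<psi> k T \<le> B"
    using H unfolding H_defined_def finite_nat_set_iff_bounded_le by blast
  have "l_psi \<psi> k T n \<le> k ^ B" if T: "T \<in> A" for T
  proof (cases "T = empty_table")
    case False
    obtain U where U: "irred_cover \<psi> k T n U" "card U = l_psi \<psi> k T n"
      using l_psi_attained[OF bcm False] by blast
    obtain T' where "T' \<in> A" "psi_a \<psi> k T' \<le> n" "card U \<le> k ^ psi_d \<psi> k T'"
      using irred_cover_card_le_pow_psi_d[OF bcm k cl T False U(1)] by blast
    then have "k ^ psi_d \<psi> k T' \<le> k ^ B" using B k by (simp add: power_increasing)
    with U(2) \<open>card U \<le> k ^ psi_d \<psi> k T'\<close> show ?thesis by simp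
  qed (simp add: l_psi_def)
  then show ?thesis unfolding L_defined_def finite_nat_set_iff_bounded_le by blast
qed

theorem theorem1:
  fixes \<psi> :: "nat list \<Rightarrow> nat" and k :: nat and A :: "table set"
  assumes "bounded_complexity_measure \<psi>"
    and "k \<ge> 2"
    and "closed_class k A"
    and "nontrivial_class A"
  shows "(\<forall>n. H_defined \<psi> k A n) \<longleftrightarrow> (\<forall>n. L_defined \<psi> k A n)"
proof -
  have k: "0 < k" using assms(2) by simp
  have "A \<subseteq> M_inf k" using assms(3) by (simp add: closed_class_def)
  then show ?thesis
    using H_defined_if_L_defined[OF assms(1) k] L_defined_if_H_defined[OF assms(1) k assms(3)] by blast
qed

end
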